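(* Let $d \geq 2$ be an integer and let $G$ be a standard Gaussian random vector in $\mathbb{R}^d$ (mean zero, identity covariance). Then \[ \mathbb{P}(\|G\| > \sqrt{d}) \geq \frac{1}{33} \quad\text{and}\quad \mathbb{P}(\|G\| > \sqrt{d+2}) \geq \frac{1}{397}. \]
   Context: $\|\cdot\|$ denotes the standard Euclidean norm on $\mathbb{R}^d$. *)

theory Defs
  imports "HOL-Probability.Probability"
begin

end

theory Submission
  imports Defs
begin

text \<open>
  The quantity \<open>\<parallel>G\<parallel>\<^sup>2 - d\<close> is the sum of the \<open>d\<close> independent variables \<open>G\<^sub>i\<^sup>2 - 1\<close>, whose
  moments of order 1 to 4 are \<open>0, 2, 8, 60\<close>; by the binomial theorem its own moments are
  \<open>0, 2d, 8d, 12d\<^sup>2 + 48d\<close>. The quartic \<open>p(w) = (20w + 16w\<^sup>2 + w\<^sup>3 - w\<^sup>4)/160\<close> lies below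
  the indicator of \<open>(0, \<infinity>)\<close>, so \<open>P(Z > 0) \<ge> E p(Z)\<close> for every \<open>Z\<close> with four moments.
  Applied to \<open>Z = (\<parallel>G\<parallel>\<^sup>2 - d)/\<surd>(2d)\<close> and \<open>Z = (\<parallel>G\<parallel>\<^sup>2 - d - 2)/\<surd>(2d)\<close> this yields an explicit
  polynomial in \<open>u = 1/\<surd>(2d) \<le> 1/2\<close>, which stays above \<open>1/33\<close> and \<open>1/397\<close> respectively.
\<close>

lemma (in prob_space) has_bochner_integral_indep_var_mult:
  fixes X Y :: "'a \<Rightarrow> real"
  assumes "indep_var borel X borel Y" "has_bochner_integral M X x" "has_bochner_integral M Y y"
  shows "has_bochner_integral M (\<lambda>\<omega>. X \<omega> * Y \<omega>) (x * y)"
  using assms indep_var_lebesgue_integral[OF assms(1)] indep_var_integrable[OF assms(1)]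
  by (simp add: has_bochner_integral_iff)

definition has_moments :: "'a measure \<Rightarrow> ('a \<Rightarrow> real) \<Rightarrow> real list \<Rightarrow> bool" where
  "has_moments M X ms \<longleftrightarrow> (\<forall>k < length ms. has_bochner_integral M (\<lambda>\<omega>. X \<omega> ^ k) (ms ! k))"

definition binomial_convolution :: "real list \<Rightarrow> real list \<Rightarrow> real list" where
  "binomial_convolution a b =
     map (\<lambda>n. \<Sum>k\<le>n. of_nat (n choose k) * a ! k * b ! (n - k)) [0..<min (length a) (length b)]"

lemma (in prob_space) has_moments_add_indep:
  assumes indep: "indep_var borel X borel Y" and "has_moments M X a" "has_moments M Y b"
  shows "has_moments M (\<lambda>\<omega>. X \<omega> + Y \<omega>) (binomial_convolution a b)"
  unfolding has_moments_def
proof (intro allI impI)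
  fix n assume "n < length (binomial_convolution a b)"
  then have n: "n < length a" "n < length b" by (simp_all add: binomial_convolution_def)
  have "has_bochner_integral M (\<lambda>\<omega>. \<Sum>k\<le>n. of_nat (n choose k) * (X \<omega> ^ k * Y \<omega> ^ (n - k)))
          (\<Sum>k\<le>n. of_nat (n choose k) * (a ! k * b ! (n - k)))"
  proof (intro has_bochner_integral_sum has_bochner_integral_mult_right has_bochner_integral_indep_var_mult)
    fix k assume "k \<in> {..n}"
    then show "has_bochner_integral M (\<lambda>\<omega>. X \<omega> ^ k) (a ! k)"
      "has_bochner_integral M (\<lambda>\<omega>. Y \<omega> ^ (n - k)) (b ! (n - k))"
      using n assms(2,3) by (auto simp: has_moments_def)
    show "indep_var borel (\<lambda>\<omega>. X \<omega> ^ k) borel (\<lambda>\<omega>. Y \<omega> ^ (n - k))"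
      using indep_var_compose[OF indep, of "\<lambda>x. x ^ k" borel "\<lambda>x. x ^ (n - k)" borel]
      by (simp add: comp_def)
  qed
  then show "has_bochner_integral M (\<lambda>\<omega>. (X \<omega> + Y \<omega>) ^ n) (binomial_convolution a b ! n)"
    using n by (simp add: binomial_convolution_def binomial_ring mult.assoc)
qed

lemma (in prob_space) has_moments_add_const:
  assumes "has_moments M X a"
  shows "has_moments M (\<lambda>\<omega>. X \<omega> + c) (binomial_convolution a (map (power c) [0..<length a]))"
  unfolding has_moments_def
proof (intro allI impI)
  fix n assume "n < length (binomial_convolution a (map (power c) [0..<length a]))"
  then have n: "n < length a" by (simp add: binomial_convolution_def)
  have "has_bochner_integral M (\<lambda>\<omega>. \<Sum>k\<le>n. of_nat (n choose k) * X \<omega> ^ k * c ^ (n - k))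
          (\<Sum>k\<le>n. of_nat (n choose k) * a ! k * c ^ (n - k))"
    using n assms
    by (intro has_bochner_integral_sum has_bochner_integral_mult_right has_bochner_integral_mult_left)
      (auto simp: has_moments_def)
  then show "has_bochner_integral M (\<lambda>\<omega>. (X \<omega> + c) ^ n)
      (binomial_convolution a (map (power c) [0..<length a]) ! n)"
    using n by (simp add: binomial_convolution_def binomial_ring)
qed

lemma has_moments_scale:
  assumes "has_moments M X a"
  shows "has_moments M (\<lambda>\<omega>. c * X \<omega>) (map (\<lambda>k. c ^ k * a ! k) [0..<length a])"
  using assms by (auto simp: has_moments_def power_mult_distrib intro: has_bochner_integral_mult_right)

lemma (in prob_space) has_moments_std_normal_sq:
  assumes "distributed M lborel X std_normal_density"
  shows "has_moments M (\<lambda>\<omega>. X \<omega> ^ 2) (map (\<lambda>k. fact (2 * k) / (2 ^ k * fact k)) [0..<n])"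
  unfolding has_moments_def
proof (intro allI impI)
  fix k assume "k < length (map (\<lambda>k. fact (2 * k) / (2 ^ k * fact k) :: real) [0..<n])"
  then have "k < n" by simp
  have "integrable M (\<lambda>\<omega>. X \<omega> ^ (2 * k))"
    using distributed_integrable[OF assms, of "\<lambda>x. x ^ (2 * k)"] integrable_std_normal_moment
    by simp
  moreover have "integral\<^sup>L M (\<lambda>\<omega>. X \<omega> ^ (2 * k)) = fact (2 * k) / (2 ^ k * fact k)"
    using distributed_integral[OF assms, of "\<lambda>x. x ^ (2 * k)"] integral_std_normal_moment_even
    by simp
  ultimately show "has_bochner_integral M (\<lambda>\<omega>. (X \<omega> ^ 2) ^ k)
      (map (\<lambda>k. fact (2 * k) / (2 ^ k * fact k)) [0..<n] ! k)"
    using \<open>k < n\<close> by (simp add: has_bochner_integral_iff power_mult)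
qed

definition centered_chi_square_moments :: "real \<Rightarrow> real list" where
  "centered_chi_square_moments n = [1, 0, 2 * n, 8 * n, 12 * n\<^sup>2 + 48 * n]"

lemma (in prob_space) has_moments_std_normal_sq_minus_one:
  assumes "distributed M lborel X std_normal_density"
  shows "has_moments M (\<lambda>\<omega>. X \<omega> ^ 2 - 1) (centered_chi_square_moments 1)"
proof -
  have "has_moments M (\<lambda>\<omega>. X \<omega> ^ 2 - 1)
      (binomial_convolution [1, 1, 3, 15, 105] (map (power (- 1)) [0..<5]))"
    using has_moments_add_const[OF has_moments_std_normal_sq[OF assms, of 5], where c="-1"]
    by (simp add: upt_rec numeral_eq_Suc)
  then show ?thesis
    by (simp add: binomial_convolution_def centered_chi_square_moments_def upt_rec numeral_eq_Suc)
qed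

lemma binomial_convolution_centered_chi_square_moments:
  "binomial_convolution (centered_chi_square_moments m) (centered_chi_square_moments n)
     = centered_chi_square_moments (m + n)"
  by (simp add: binomial_convolution_def centered_chi_square_moments_def upt_rec numeral_eq_Suc
      algebra_simps power2_eq_square)

lemma (in prob_space) has_moments_sum_centered_chi_square:
  assumes "finite J" "indep_vars (\<lambda>_. borel) Y J"
    and "\<And>i. i \<in> J \<Longrightarrow> has_moments M (Y i) (centered_chi_square_moments 1)"
  shows "has_moments M (\<lambda>\<omega>. \<Sum>i\<in>J. Y i \<omega>) (centered_chi_square_moments (card J))"
  using assms
proof (induction J rule: finite_induct)
  case empty
  then show ?case
    by (auto simp: has_moments_def centered_chi_square_moments_def less_Suc_eq prob_space
        has_bochner_integral_iff)
next
  case (insert j J)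
  have "indep_var borel (Y j) borel (\<lambda>\<omega>. \<Sum>i\<in>J. Y i \<omega>)"
    using insert.hyps insert.prems(1) by (intro indep_vars_sum) auto
  moreover have "has_moments M (\<lambda>\<omega>. \<Sum>i\<in>J. Y i \<omega>) (centered_chi_square_moments (card J))"
    using insert by (auto intro: indep_vars_subset)
  ultimately have "has_moments M (\<lambda>\<omega>. Y j \<omega> + (\<Sum>i\<in>J. Y i \<omega>))
      (centered_chi_square_moments (1 + card J))"
    using has_moments_add_indep insert.prems(2)
    by (simp flip: binomial_convolution_centered_chi_square_moments)
  with insert.hyps show ?case by (simp add: add.commute)
qed

lemma quartic_le_indicator_pos:
  fixes w :: real
  shows "(20 * w + 16 * w\<^sup>2 + w ^ 3 - w ^ 4) / 160 \<le> (if 0 < w then 1 else 0)"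
proof (cases "0 < w")
  case True
  have "160 - (20 * w + 16 * w\<^sup>2 + w ^ 3 - w ^ 4) = (w\<^sup>2 - w / 2 - 10)\<^sup>2 + 15 / 4 * (w - 4)\<^sup>2"
    by (simp add: algebra_simps power2_eq_square power4_eq_xxxx power3_eq_cube)
  moreover have "0 \<le> (w\<^sup>2 - w / 2 - 10)\<^sup>2 + 15 / 4 * (w - 4)\<^sup>2"
    by simp
  ultimately have "20 * w + 16 * w\<^sup>2 + w ^ 3 - w ^ 4 \<le> 160"
    by linarith
  with True show ?thesis
    by simp
next
  case False
  have "20 * w + 16 * w\<^sup>2 + w ^ 3 - w ^ 4 = w * ((w + 2)\<^sup>2 * (5 - w))"
    by (simp add: algebra_simps power2_eq_square power4_eq_xxxx power3_eq_cube)
  moreover have "w * ((w + 2)\<^sup>2 * (5 - w)) \<le> 0"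
    using False by (intro mult_nonpos_nonneg) auto
  ultimately show ?thesis
    using False by simp
qed

lemma (in prob_space) prob_pos_ge_moments:
  assumes "has_moments M X m" "5 \<le> length m"
  shows "(20 * m ! 1 + 16 * m ! 2 + m ! 3 - m ! 4) / 160 \<le> prob {\<omega> \<in> space M. 0 < X \<omega>}"
proof -
  have moment: "has_bochner_integral M (\<lambda>\<omega>. X \<omega> ^ k) (m ! k)" if "k \<in> {1..4}" for k
    using assms that by (auto simp: has_moments_def)
  have "X \<in> borel_measurable M"
    using moment[of 1] by (auto dest: borel_measurable_has_bochner_integral)
  then have events: "{\<omega> \<in> space M. 0 < X \<omega>} \<in> events"
    by measurable
  let ?p = "\<lambda>w::real. (20 * w + 16 * w\<^sup>2 + w ^ 3 - w ^ 4) / 160"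
  have "has_bochner_integral M (\<lambda>\<omega>. ?p (X \<omega>)) ((20 * m ! 1 + 16 * m ! 2 + m ! 3 - m ! 4) / 160)"
    using moment[of 1] moment[of 2] moment[of 3] moment[of 4]
    by (intro has_bochner_integral_divide_zero has_bochner_integral_diff has_bochner_integral_add
        has_bochner_integral_mult_right) auto
  then have integrable: "integrable M (\<lambda>\<omega>. ?p (X \<omega>))"
    and expectation_p: "expectation (\<lambda>\<omega>. ?p (X \<omega>)) = (20 * m ! 1 + 16 * m ! 2 + m ! 3 - m ! 4) / 160"
    by (simp_all add: has_bochner_integral_iff)
  have "expectation (\<lambda>\<omega>. ?p (X \<omega>)) \<le> expectation (indicator {\<omega> \<in> space M. 0 < X \<omega>})"
  proof (rule integral_mono[OF integrable])
    show "integrable M (indicator {\<omega> \<in> space M. 0 < X \<omega>} :: 'a \<Rightarrow> real)"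
      using events by (simp add: emeasure_eq_measure)
    show "?p (X \<omega>) \<le> indicator {\<omega> \<in> space M. 0 < X \<omega>} \<omega>" if "\<omega> \<in> space M" for \<omega>
      using that quartic_le_indicator_pos[of "X \<omega>"] by (cases "0 < X \<omega>") (simp_all add: indicator_def)
  qed
  with expectation_p events show ?thesis
    by simp
qed

lemma (in prob_space) has_moments_scaled_centered_chi_square:
  assumes X: "has_moments M X (centered_chi_square_moments n)" and u: "0 < u" "2 * n * u\<^sup>2 = 1"
  shows "has_moments M (\<lambda>\<omega>. u * X \<omega>) [1, 0, 1, 4 * u, 3 + 24 * u\<^sup>2]"
    and "has_moments M (\<lambda>\<omega>. u * (X \<omega> - 2))
          [1, - 2 * u, 1 + 4 * u\<^sup>2, - 2 * u - 8 * u ^ 3, 3 + 16 * u\<^sup>2 + 16 * u ^ 4]"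
proof -
  have n: "n = 1 / (2 * u\<^sup>2)"
    using u by (simp add: field_simps)
  have "map (\<lambda>k. u ^ k * centered_chi_square_moments n ! k) [0..<length (centered_chi_square_moments n)]
      = [1, 0, 1, 4 * u, 3 + 24 * u\<^sup>2]"
    using u by (simp add: centered_chi_square_moments_def upt_rec numeral_eq_Suc n)
      (simp add: field_simps power2_eq_square)
  with has_moments_scale[OF X, of u]
  show "has_moments M (\<lambda>\<omega>. u * X \<omega>) [1, 0, 1, 4 * u, 3 + 24 * u\<^sup>2]"
    by simp
  let ?m = "binomial_convolution (centered_chi_square_moments n)
              (map (power (- 2)) [0..<length (centered_chi_square_moments n)])"
  have "map (\<lambda>k. u ^ k * ?m ! k) [0..<length ?m]
     = [1, - 2 * u, 1 + 4 * u\<^sup>2, - 2 * u - 8 * u ^ 3, 3 + 16 * u\<^sup>2 + 16 * u ^ 4]"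
    using u by (simp add: binomial_convolution_def centered_chi_square_moments_def upt_rec numeral_eq_Suc n)
      (simp add: field_simps power2_eq_square)
  with has_moments_scale[OF has_moments_add_const[OF X, where c="-2"], of u]
  show "has_moments M (\<lambda>\<omega>. u * (X \<omega> - 2))
      [1, - 2 * u, 1 + 4 * u\<^sup>2, - 2 * u - 8 * u ^ 3, 3 + 16 * u\<^sup>2 + 16 * u ^ 4]"
    by simp
qed

lemma (in prob_space) centered_chi_square_tail_bounds:
  assumes X: "has_moments M X (centered_chi_square_moments n)" and n: "2 \<le> n"
  shows "1 / 33 \<le> prob {\<omega> \<in> space M. 0 < X \<omega>}"
    and "1 / 397 \<le> prob {\<omega> \<in> space M. 2 < X \<omega>}"
proof -
  define u where "u = 1 / sqrt (2 * n)"
  have u: "0 < u" "2 * n * u\<^sup>2 = 1"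
    using n by (auto simp: u_def power_divide)
  have "u \<le> 1 / 2"
    using n real_sqrt_le_mono[of 4 "2 * n"] by (simp add: u_def)
  then have u2: "u\<^sup>2 \<le> 1 / 4" "u ^ 3 \<le> u\<^sup>2 / 2" "u ^ 4 \<le> u\<^sup>2 / 4"
    using u(1) power_mono[of u "1 / 2" 2] mult_left_mono[of u "1 / 2" "u\<^sup>2"]
      mult_left_mono[of "u\<^sup>2" "1 / 4" "u\<^sup>2"]
    by (simp_all add: power2_eq_square power3_eq_cube power4_eq_xxxx)
  have "1 / 33 \<le> (20 * 0 + 16 * 1 + 4 * u - (3 + 24 * u\<^sup>2)) / 160"
    using u2 u by simp
  also have "\<dots> \<le> prob {\<omega> \<in> space M. 0 < u * X \<omega>}"
    using prob_pos_ge_moments[OF has_moments_scaled_centered_chi_square(1)[OF X u]] by simp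
  finally show "1 / 33 \<le> prob {\<omega> \<in> space M. 0 < X \<omega>}"
    using u by (simp add: zero_less_mult_iff)
  have "0 \<le> 40 * u\<^sup>2 - 42 * u + 441 / 40"
    using zero_le_power2[of "u - 21 / 40"] by (simp add: power2_diff power_divide)
  then have "1 / 397 \<le> (20 * (- 2 * u) + 16 * (1 + 4 * u\<^sup>2) + (- 2 * u - 8 * u ^ 3)
      - (3 + 16 * u\<^sup>2 + 16 * u ^ 4)) / 160"
    using u2 by simp
  also have "\<dots> \<le> prob {\<omega> \<in> space M. 0 < u * (X \<omega> - 2)}"
    using prob_pos_ge_moments[OF has_moments_scaled_centered_chi_square(2)[OF X u]] by simp
  finally show "1 / 397 \<le> prob {\<omega> \<in> space M. 2 < X \<omega>}"
    using u by (simp add: zero_less_mult_iff)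
qed

theorem lemma1:
  fixes M :: "'a measure" and G :: "nat \<Rightarrow> 'a \<Rightarrow> real" and d :: nat
  assumes "prob_space M"
    and "d \<ge> 2"
    and "prob_space.indep_vars M (\<lambda>_. borel) G {..<d}"
    and "\<And>i. i < d \<Longrightarrow> distributed M lborel (G i) std_normal_density"
  shows "measure M {\<omega> \<in> space M. sqrt (\<Sum>i<d. (G i \<omega>)\<^sup>2) > sqrt (real d)} \<ge> 1 / 33
       \<and> measure M {\<omega> \<in> space M. sqrt (\<Sum>i<d. (G i \<omega>)\<^sup>2) > sqrt (real d + 2)} \<ge> 1 / 397"
proof -
  interpret prob_space M by fact
  define X where "X \<omega> = (\<Sum>i<d. (G i \<omega>)\<^sup>2 - 1)" for \<omega>
  have "has_moments M X (centered_chi_square_moments (card {..<d}))"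
    unfolding X_def
  proof (rule has_moments_sum_centered_chi_square)
    show "indep_vars (\<lambda>_. borel) (\<lambda>i \<omega>. (G i \<omega>)\<^sup>2 - 1) {..<d}"
      using indep_vars_compose2[OF assms(3), of "\<lambda>_ x. x\<^sup>2 - 1" "\<lambda>_. borel"] by simp
    show "has_moments M (\<lambda>\<omega>. (G i \<omega>)\<^sup>2 - 1) (centered_chi_square_moments 1)" if "i \<in> {..<d}" for i
      using has_moments_std_normal_sq_minus_one assms(4) that by simp
  qed simp
  then have "1 / 33 \<le> prob {\<omega> \<in> space M. 0 < X \<omega>}"
    and "1 / 397 \<le> prob {\<omega> \<in> space M. 2 < X \<omega>}"
    using centered_chi_square_tail_bounds assms(2) by auto
  moreover have "(\<Sum>i<d. (G i \<omega>)\<^sup>2) = X \<omega> + real d" for \<omega>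
    by (simp add: X_def sum_subtractf)
  ultimately show ?thesis
    by (simp add: add.commute)
qed

end
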